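(* Let $\mathcal{I}=(\mathcal{P},\mathcal{L})$ be a cyclic symmetric $(v,k)$-configuration with cyclic permutation $\sigma$. Fix a point $P_0$ and a block $\ell_0$, and put $P_i=\sigma^i(P_0)$, $\ell_i=\sigma^i(\ell_0)$ (indices modulo $v$). Let $d$ be a positive divisor of $v$, $t=v/d$, $O_i=\{P_u:u\equiv i\pmod t\}$, $L_i=\{\ell_u:u\equiv i\pmod t\}$ for $i=0,\dots,t-1$, and $w_u=|\ell_0\cap O_u|$. Let $V$ be the $v\times v$ incidence matrix of $\mathcal{I}$ whose rows are ordered as $\ell_0,\ell_t,\dots,\ell_{(d-1)t},\ell_1,\ell_{1+t},\dots,\ell_{t-1+(d-1)t}$ (i.e. $L_0$, then $L_1$, etc., each listed as $\ell_i,\ell_{i+t},\dots,\ell_{i+(d-1)t}$) and whose columns are ordered analogously as $P_0,P_t,\dots$ ($O_0$, then $O_1$, etc.). Then $V$ (which contains no $2\times2$ all-ones submatrix) is $d$-block circulant: writing $V=(C_{i,j})_{0\le i,j\le t-1}$ as a $t\times t$ block matrix of $d\times d$ blocks, each $C_{i,j}$ is a binary circulant $d\times d$ matrix with no $2\times 2$ all-ones submatrix and of weight $w_{j-i \bmod t}$. In particular the weight matrix $W(V)$ is the circulant $t\times t$ matrix whose $(i,j)$ entry is $w_{j-i\bmod t}$ (first row $w_0,w_1,\dots,w_{t-1}$, each subsequent row the cyclic right shift of the previous one).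
   Context: A symmetric $(v,k)$-configuration is a pair $(\mathcal{P},\mathcal{L})$ with $|\mathcal{P}|=|\mathcal{L}|=v$, blocks being subsets of $\mathcal{P}$, each block containing $k$ points, each point in $k$ blocks, any two points in at most one common block; it is cyclic if there is a permutation $\sigma$ of $\mathcal{P}$ mapping blocks to blocks with $\langle\sigma\rangle$ acting regularly on points and on blocks. The incidence matrix has rows indexed by blocks, columns by points, entry $1$ iff the point lies on the block. A square matrix is circulant if each row is obtained from the previous one by a cyclic shift one position to the right; its weight is the number of ones in each row. An $i\times j$ binary matrix is $d$-block circulant if it is partitioned into $d\times d$ blocks each of which is circulant; its weight matrix is the $(i/d)\times(j/d)$ matrix whose entries are the weights of these blocks. *)

theory Defs
  imports Main
begin

definition sym_config :: "'a set \<Rightarrow> 'a set set \<Rightarrow> nat \<Rightarrow> nat \<Rightarrow> bool" where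
  "sym_config P L v k \<longleftrightarrow>
     finite P \<and> card P = v \<and> card L = v \<and>
     (\<forall>l\<in>L. l \<subseteq> P \<and> card l = k) \<and>
     (\<forall>x\<in>P. card {l\<in>L. x \<in> l} = k) \<and>
     (\<forall>x\<in>P. \<forall>y\<in>P. x \<noteq> y \<longrightarrow> card {l\<in>L. x \<in> l \<and> y \<in> l} \<le> 1)"

definition regular_cyclic_action :: "('b \<Rightarrow> 'b) \<Rightarrow> 'b set \<Rightarrow> bool" where
  "regular_cyclic_action act X \<longleftrightarrow>
     (\<forall>x\<in>X. \<forall>y\<in>X. \<exists>n. (act ^^ n) x = y) \<and>
     (\<forall>x\<in>X. \<forall>n. (act ^^ n) x = x \<longrightarrow> (\<forall>z\<in>X. (act ^^ n) z = z))"

definition cyclic_sym_config ::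
  "'a set \<Rightarrow> 'a set set \<Rightarrow> nat \<Rightarrow> nat \<Rightarrow> ('a \<Rightarrow> 'a) \<Rightarrow> bool" where
  "cyclic_sym_config P L v k \<sigma> \<longleftrightarrow>
     sym_config P L v k \<and> bij_betw \<sigma> P P \<and> (\<forall>l\<in>L. \<sigma> ` l \<in> L) \<and>
     regular_cyclic_action \<sigma> P \<and> regular_cyclic_action (image \<sigma>) L"

definition circulant :: "nat \<Rightarrow> (nat \<Rightarrow> nat \<Rightarrow> nat) \<Rightarrow> bool" where
  "circulant d C \<longleftrightarrow> (\<forall>a b. Suc a < d \<and> b < d \<longrightarrow> C (Suc a) ((b + 1) mod d) = C a b)"

definition binary_mat :: "nat \<Rightarrow> nat \<Rightarrow> (nat \<Rightarrow> nat \<Rightarrow> nat) \<Rightarrow> bool" where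
  "binary_mat m n C \<longleftrightarrow> (\<forall>a<m. \<forall>b<n. C a b = 0 \<or> C a b = 1)"

definition no_2x2_ones :: "nat \<Rightarrow> nat \<Rightarrow> (nat \<Rightarrow> nat \<Rightarrow> nat) \<Rightarrow> bool" where
  "no_2x2_ones m n C \<longleftrightarrow>
     \<not> (\<exists>a1<m. \<exists>a2<m. \<exists>b1<n. \<exists>b2<n. a1 \<noteq> a2 \<and> b1 \<noteq> b2 \<and>
          C a1 b1 = 1 \<and> C a1 b2 = 1 \<and> C a2 b1 = 1 \<and> C a2 b2 = 1)"

text \<open>Weight of a circulant d x d matrix: number of ones in (the first, hence every) row.\<close>
definition weight :: "nat \<Rightarrow> (nat \<Rightarrow> nat \<Rightarrow> nat) \<Rightarrow> nat" where
  "weight d C = card {b. b < d \<and> C 0 b = 1}"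

definition block :: "nat \<Rightarrow> (nat \<Rightarrow> nat \<Rightarrow> nat) \<Rightarrow> nat \<Rightarrow> nat \<Rightarrow> (nat \<Rightarrow> nat \<Rightarrow> nat)" where
  "block d M i j = (\<lambda>a b. M (i * d + a) (j * d + b))"

definition block_circulant :: "nat \<Rightarrow> nat \<Rightarrow> nat \<Rightarrow> (nat \<Rightarrow> nat \<Rightarrow> nat) \<Rightarrow> bool" where
  "block_circulant d m n M \<longleftrightarrow> d > 0 \<and> d dvd m \<and> d dvd n \<and>
     (\<forall>i < m div d. \<forall>j < n div d. circulant d (block d M i j))"

definition weight_matrix :: "nat \<Rightarrow> (nat \<Rightarrow> nat \<Rightarrow> nat) \<Rightarrow> (nat \<Rightarrow> nat \<Rightarrow> nat)" where
  "weight_matrix d M = (\<lambda>i j. weight d (block d M i j))"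

end

theory Submission
  imports Defs "HOL-Combinatorics.Orbits"
begin

text \<open>Because the cyclic group generated by \<open>\<sigma>\<close> acts regularly, \<open>P_u = \<sigma>^u(P_0)\<close> and
  \<open>l_u = \<sigma>^u(l_0)\<close> enumerate points and blocks without repetition for \<open>u < v\<close>, are
  \<open>v\<close>-periodic in \<open>u\<close>, and incidence is shift invariant: \<open>P_a \<in> l_b \<longleftrightarrow> P_(a+c) \<in> l_(b+c)\<close>.
  In the interleaved ordering the entry \<open>(a, b)\<close> of block \<open>(i, j)\<close> records \<open>P_(j+bt) \<in> l_(i+at)\<close>,
  so a step down the diagonal of a block shifts both indices by \<open>t\<close>, wrapping around through
  the period \<open>v = t d\<close>; hence every block is circulant. The weight of block \<open>(i, j)\<close> is
  \<open>|l_i \<inter> O_j|\<close>, and \<open>\<sigma>^i\<close> maps \<open>l_0 \<inter> O_(j-i)\<close> bijectively onto \<open>l_i \<inter> O_j\<close>. The absence of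
  \<open>2 \<times> 2\<close> all-ones submatrices is the axiom that two points share at most one block.\<close>

lemma image_funpow: "(image f ^^ n) A = ((f :: 'a \<Rightarrow> 'a) ^^ n) ` A"
  by (induction n) (simp_all add: image_comp)

lemma self_in_orbit_if_bij_betw:
  assumes "finite X" "bij_betw f X X" "x \<in> X"
  shows "x \<in> orbit f x"
proof -
  define g where "g y = (if y \<in> X then f y else y)" for y
  have "bij_betw g X X"
    using assms(2) by (simp add: g_def cong: bij_betw_cong)
  then have "g permutes X"
    by (rule bij_imp_permutes) (simp add: g_def)
  then have "x \<in> orbit g x"
    using assms(1) by (intro permutation_self_in_orbit permutes_imp_permutation)
  moreover have "orbit f x = orbit g x"
    using assms(2,3) by (intro orbit_cong0[of x X]) (auto simp: g_def bij_betw_def)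
  ultimately show ?thesis by simp
qed

lemma funpow_card_transitive:
  assumes fin: "finite X" and bij: "bij_betw f X X" and x: "x \<in> X"
    and trans: "\<forall>y\<in>X. \<exists>n. (f ^^ n) x = y"
  shows "(f ^^ card X) x = x" and "inj_on (\<lambda>n. (f ^^ n) x) {..<card X}"
proof -
  have self: "x \<in> orbit f x"
    by (rule self_in_orbit_if_bij_betw[OF fin bij x])
  define p where "p = funpow_dist1 f x x"
  have inj: "inj_on (\<lambda>n. (f ^^ n) x) {..<p}"
    using inj_on_funpow_dist1[OF self] by (simp add: p_def atLeast0LessThan)
  have "orbit f x = X"
  proof
    show "orbit f x \<subseteq> X"
      using bij_betw_funpow[OF bij] x by (auto simp: orbit_altdef bij_betw_def)
    show "X \<subseteq> orbit f x"
      using trans by (auto simp: orbit_altdef_self_in[OF self])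
  qed
  then have "X = (\<lambda>n. (f ^^ n) x) ` {..<p}"
    using orbit_conv_funpow_dist1[OF self] by (simp add: p_def atLeast0LessThan)
  then have "card X = p"
    using card_image[OF inj] by simp
  then show "(f ^^ card X) x = x" and "inj_on (\<lambda>n. (f ^^ n) x) {..<card X}"
    using funpow_dist1_prop[OF self] inj by (simp_all add: p_def)
qed

text \<open>Position \<open>r\<close> of the ordering \<open>l_0, l_t, \<dots>, l_((d-1)t), l_1, l_(1+t), \<dots>\<close> carries the
  index \<open>stride_index d t r\<close>.\<close>

definition stride_index :: "nat \<Rightarrow> nat \<Rightarrow> nat \<Rightarrow> nat" where
  "stride_index d t r = r div d + (r mod d) * t"

lemma stride_index_block: "a < d \<Longrightarrow> stride_index d t (i * d + a) = i + a * t"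
  by (simp add: stride_index_def)

lemma add_mult_less_mult:
  fixes i a t d :: nat
  assumes "i < t" "a < d"
  shows "i + a * t < t * d"
proof -
  have "i + a * t < Suc a * t" using assms(1) by simp
  also have "\<dots> \<le> d * t" using assms(2) by (intro mult_le_mono1) simp
  finally show ?thesis by (simp add: mult.commute)
qed

lemma div_less_if_less_mult: "(r :: nat) < t * d \<Longrightarrow> r div d < t"
  by (cases "d = 0") (auto simp: div_less_iff_less_mult mult.commute)

lemma stride_index_less:
  assumes "r < t * d"
  shows "stride_index d t r < t * d"
proof -
  have "0 < d" using assms by (cases d) simp_all
  then show ?thesis
    unfolding stride_index_def using assms by (intro add_mult_less_mult div_less_if_less_mult) simp_all
qed

lemma inj_on_stride_index: "inj_on (stride_index d t) {..<t * d}"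
proof (rule inj_onI)
  fix r s assume "r \<in> {..<t * d}" "s \<in> {..<t * d}" and eq: "stride_index d t r = stride_index d t s"
  then have "r div d < t" "s div d < t"
    by (simp_all add: div_less_if_less_mult)
  with eq have div: "r div d = s div d"
    unfolding stride_index_def by (metis mod_less mod_mult_self1)
  with eq have "(r mod d) * t = (s mod d) * t"
    by (simp add: stride_index_def)
  then have "r mod d = s mod d"
    using \<open>r div d < t\<close> by simp
  with div show "r = s"
    by (metis div_mult_mod_eq)
qed

lemma circulant_block_stride:
  assumes shift: "\<And>a b c. g (a + c) (b + c) = g a b"
    and period: "\<And>a b. g (a + t * d) b = g a b"
  shows "circulant d (block d (\<lambda>r c. g (stride_index d t c) (stride_index d t r)) i j)"
  unfolding circulant_def
proof (intro allI impI)
  let ?M = "\<lambda>r c. g (stride_index d t c) (stride_index d t r)"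
  fix a b assume ab: "Suc a < d \<and> b < d"
  have entry: "block d ?M i j a' b' = g (j + b' * t) (i + a' * t)" if "a' < d" "b' < d" for a' b'
    using that by (simp add: block_def stride_index_block)
  have row: "i + Suc a * t = (i + a * t) + t"
    by simp
  have "g (j + ((b + 1) mod d) * t) (i + Suc a * t) = g (j + b * t) (i + a * t)"
  proof (cases "b + 1 < d")
    case True
    then have "j + ((b + 1) mod d) * t = (j + b * t) + t"
      by simp
    then show ?thesis
      unfolding row by (simp only: shift)
  next
    case False
    then have "d = Suc b"
      using ab by simp
    then have "(b + 1) mod d = 0" and "j + t * d = (j + b * t) + t"
      by (simp_all add: algebra_simps)
    then have "g (j + ((b + 1) mod d) * t) (i + Suc a * t) = g ((j + b * t) + t) ((i + a * t) + t)"
      unfolding row by (simp add: add.assoc flip: period[of j])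
    then show ?thesis
      by (simp only: shift)
  qed
  then show "block d ?M i j (Suc a) ((b + 1) mod d) = block d ?M i j a b"
    using ab by (simp add: entry)
qed

lemma block_index_less: "(i :: nat) < t \<Longrightarrow> a < d \<Longrightarrow> i * d + a < t * d"
  using add_mult_less_mult[of a d i t] by (simp add: ac_simps)

lemma binary_mat_block:
  assumes "binary_mat (t * d) (t * d) M" "i < t" "j < t"
  shows "binary_mat d d (block d M i j)"
  using assms block_index_less unfolding binary_mat_def block_def by blast

lemma no_2x2_ones_block:
  assumes "no_2x2_ones (t * d) (t * d) M" "i < t" "j < t"
  shows "no_2x2_ones d d (block d M i j)"
  unfolding no_2x2_ones_def block_def
proof clarify
  fix a1 a2 b1 b2
  assume "a1 < d" "a2 < d" "b1 < d" "b2 < d" "a1 \<noteq> a2" "b1 \<noteq> b2"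
    and "M (i * d + a1) (j * d + b1) = 1" "M (i * d + a1) (j * d + b2) = 1"
    "M (i * d + a2) (j * d + b1) = 1" "M (i * d + a2) (j * d + b2) = 1"
  moreover have "i * d + a1 < t * d" "i * d + a2 < t * d" "j * d + b1 < t * d" "j * d + b2 < t * d"
    using assms(2,3) calculation(1-4) by (simp_all add: block_index_less)
  ultimately show False
    using assms(1) unfolding no_2x2_ones_def by fastforce
qed

lemma circulant_if_mod_diff:
  assumes "\<And>i j. i < t \<Longrightarrow> j < t \<Longrightarrow> W i j = w ((j + t - i) mod t)"
  shows "circulant t W"
  unfolding circulant_def
proof (intro allI impI)
  fix a b assume ab: "Suc a < t \<and> b < t"
  have "((b + 1) mod t + t - Suc a) mod t = (b + t - a) mod t"
  proof (cases "b + 1 < t")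
    case False
    then have "b + 1 = t" using ab by simp
    then have "(b + 1) mod t = 0" by simp
    then have "(b + 1) mod t + t - Suc a = b - a"
      using \<open>b + 1 = t\<close> by arith
    moreover have "b + t - a = (b - a) + t"
      using ab \<open>b + 1 = t\<close> by arith
    ultimately show ?thesis by simp
  qed simp
  then show "W (Suc a) ((b + 1) mod t) = W a b"
    using ab assms by simp
qed

locale cyclic_configuration =
  fixes P :: "'a set" and L :: "'a set set" and v k :: nat and \<sigma> :: "'a \<Rightarrow> 'a"
    and P0 :: 'a and l0 :: "'a set"
  assumes cyclic: "cyclic_sym_config P L v k \<sigma>"
    and P0_in: "P0 \<in> P" and l0_in: "l0 \<in> L"
begin

lemma sym_config: "sym_config P L v k"
  and bij_betw_sigma: "bij_betw \<sigma> P P"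
  and image_sigma_line: "l \<in> L \<Longrightarrow> \<sigma> ` l \<in> L"
  using cyclic unfolding cyclic_sym_config_def by blast+

lemma transitive_points: "\<forall>y\<in>P. \<exists>n. (\<sigma> ^^ n) P0 = y"
proof -
  have "regular_cyclic_action \<sigma> P"
    using cyclic unfolding cyclic_sym_config_def by (elim conjE)
  then show ?thesis
    using P0_in unfolding regular_cyclic_action_def by (elim conjE) (rule bspec)
qed

lemma transitive_lines: "\<forall>l\<in>L. \<exists>n. (image \<sigma> ^^ n) l0 = l"
proof -
  have "regular_cyclic_action (image \<sigma>) L"
    using cyclic unfolding cyclic_sym_config_def by (elim conjE)
  then show ?thesis
    using l0_in unfolding regular_cyclic_action_def by (elim conjE) (rule bspec)
qed

lemma finite_points: "finite P"
  and card_points: "card P = v"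
  and card_lines: "card L = v"
  and line_subset: "l \<in> L \<Longrightarrow> l \<subseteq> P"
  and at_most_one_line: "x \<in> P \<Longrightarrow> y \<in> P \<Longrightarrow> x \<noteq> y \<Longrightarrow> card {l\<in>L. x \<in> l \<and> y \<in> l} \<le> 1"
  using sym_config unfolding sym_config_def by blast+

lemma v_pos: "0 < v"
  using finite_points P0_in card_points card_gt_0_iff by blast

lemma finite_lines: "finite L"
  using v_pos card_lines by (intro card_ge_0_finite) simp

lemma bij_betw_image_sigma: "bij_betw (image \<sigma>) L L"
proof -
  have "inj_on (image \<sigma>) L"
  proof (rule inj_onI)
    fix l m assume "l \<in> L" "m \<in> L" "\<sigma> ` l = \<sigma> ` m"
    then show "l = m"
      using bij_betw_imp_inj_on[OF bij_betw_sigma] line_subset inj_on_image_eq_iff by metis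
  qed
  moreover have "image \<sigma> ` L = L"
    using image_sigma_line calculation by (intro endo_inj_surj finite_lines) auto
  ultimately show ?thesis by (simp add: bij_betw_def)
qed

definition point :: "nat \<Rightarrow> 'a" where
  "point u = (\<sigma> ^^ u) P0"

definition line :: "nat \<Rightarrow> 'a set" where
  "line u = (image \<sigma> ^^ u) l0"

lemma point_in_points: "point u \<in> P"
  using bij_betw_funpow[OF bij_betw_sigma] P0_in by (auto simp: point_def bij_betw_def)

lemma line_in_lines: "line u \<in> L"
  using bij_betw_funpow[OF bij_betw_image_sigma] l0_in by (auto simp: line_def bij_betw_def)

lemma point_mod: "point (u mod v) = point u"
  using funpow_card_transitive(1)[OF finite_points bij_betw_sigma P0_in transitive_points]
  by (simp add: point_def card_points funpow_mod_eq)

lemma inj_on_point: "inj_on point {..<v}"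
  using funpow_card_transitive(2)[OF finite_points bij_betw_sigma P0_in transitive_points]
  by (simp add: point_def[abs_def] card_points)

lemma inj_on_line: "inj_on line {..<v}"
  using funpow_card_transitive(2)[OF finite_lines bij_betw_image_sigma l0_in transitive_lines]
  by (simp add: line_def[abs_def] card_lines)

lemma point_add: "point (a + c) = (\<sigma> ^^ c) (point a)"
  by (simp add: point_def funpow_add add.commute[of a])

lemma line_add: "line (b + c) = (\<sigma> ^^ c) ` line b"
  by (simp add: line_def funpow_add add.commute[of b] image_funpow)

lemma inj_on_sigma_funpow: "inj_on (\<sigma> ^^ c) P"
  using bij_betw_funpow[OF bij_betw_sigma] by (simp add: bij_betw_def)

lemma incident_add_iff: "point (a + c) \<in> line (b + c) \<longleftrightarrow> point a \<in> line b"
  unfolding point_add line_add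
  by (rule inj_on_image_mem_iff[OF inj_on_sigma_funpow point_in_points line_subset[OF line_in_lines]])

lemma no_two_lines_share_two_points:
  assumes "a1 < v" "a2 < v" "a1 \<noteq> a2" "b1 < v" "b2 < v" "b1 \<noteq> b2"
    and "point a1 \<in> line b1" "point a2 \<in> line b1" "point a1 \<in> line b2" "point a2 \<in> line b2"
  shows False
proof -
  have points: "point a1 \<noteq> point a2" and lines: "line b1 \<noteq> line b2"
    using assms(1-6) inj_on_point inj_on_line by (auto dest: inj_onD)
  have "card {line b1, line b2} \<le> card {l\<in>L. point a1 \<in> l \<and> point a2 \<in> l}"
    using assms(7-10) line_in_lines finite_lines by (intro card_mono) auto
  also have "\<dots> \<le> 1"
    using at_most_one_line[OF point_in_points point_in_points points] .
  finally show False
    using lines by simp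
qed

end

locale cyclic_configuration_blocks = cyclic_configuration +
  fixes d t :: nat
  assumes v_eq: "v = t * d"
begin

lemma t_pos: "0 < t" and d_pos: "0 < d"
  using v_pos v_eq by simp_all

definition suborbit :: "nat \<Rightarrow> 'a set" where
  "suborbit i = {point u | u. u < v \<and> u mod t = i}"

definition incidence_matrix :: "nat \<Rightarrow> nat \<Rightarrow> nat" where
  "incidence_matrix r c = (if point (stride_index d t c) \<in> line (stride_index d t r) then 1 else 0)"

lemma suborbit_altdef: "suborbit i = {point u | u. u mod t = i}"
proof (intro equalityI subsetI)
  fix x assume "x \<in> {point u | u. u mod t = i}"
  then obtain u where x: "x = point u" and u: "u mod t = i"
    by blast
  have "u mod v mod t = i"
    using u v_eq by (simp add: mod_mod_cancel)
  moreover have "u mod v < v"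
    using t_pos d_pos v_eq by simp
  ultimately show "x \<in> suborbit i"
    unfolding suborbit_def x by (metis (mono_tags, lifting) mem_Collect_eq point_mod)
qed (auto simp: suborbit_def)

lemma suborbit_subset: "suborbit i \<subseteq> P"
  using point_in_points by (auto simp: suborbit_def)

lemma bij_betw_suborbit:
  assumes "j < t"
  shows "bij_betw (\<lambda>b. point (j + b * t)) {..<d} (suborbit j)"
proof -
  have "bij_betw (\<lambda>b. j + b * t) {..<d} {u. u < v \<and> u mod t = j}"
  proof (rule bij_betw_imageI)
    show "inj_on (\<lambda>b. j + b * t) {..<d}"
      using t_pos by (intro inj_onI) simp
    show "(\<lambda>b. j + b * t) ` {..<d} = {u. u < v \<and> u mod t = j}"
    proof (intro equalityI subsetI)
      fix u assume "u \<in> {u. u < v \<and> u mod t = j}"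
      then have "u = j + (u div t) * t" and "u div t < d"
        using v_eq by (auto simp: div_less_if_less_mult mult.commute[of t])
      then show "u \<in> (\<lambda>b. j + b * t) ` {..<d}"
        by blast
    qed (use assms v_eq add_mult_less_mult in auto)
  qed
  moreover have "bij_betw point {u. u < v \<and> u mod t = j} (suborbit j)"
    using inj_on_point unfolding suborbit_def
    by (intro bij_betw_imageI) (auto intro: inj_on_subset)
  ultimately show ?thesis
    using bij_betw_trans by (fastforce simp: comp_def)
qed

lemma card_suborbit: "j < t \<Longrightarrow> card (suborbit j) = d"
  using bij_betw_same_card[OF bij_betw_suborbit] by simp

lemma image_suborbit:
  assumes "i < t"
  shows "(\<sigma> ^^ c) ` suborbit i = suborbit ((i + c) mod t)"
proof (rule card_subset_eq)
  show "finite (suborbit ((i + c) mod t))"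
    using suborbit_subset finite_points by (rule finite_subset)
  show "(\<sigma> ^^ c) ` suborbit i \<subseteq> suborbit ((i + c) mod t)"
  proof
    fix x assume "x \<in> (\<sigma> ^^ c) ` suborbit i"
    then obtain u where "x = point (u + c)" and "u mod t = i"
      by (auto simp: suborbit_altdef point_add)
    moreover have "(u + c) mod t = (u mod t + c) mod t"
      by (simp add: mod_add_left_eq)
    ultimately show "x \<in> suborbit ((i + c) mod t)"
      by (auto simp: suborbit_altdef)
  qed
  have "card ((\<sigma> ^^ c) ` suborbit i) = card (suborbit i)"
    using suborbit_subset by (intro card_image inj_on_subset[OF inj_on_sigma_funpow])
  then show "card ((\<sigma> ^^ c) ` suborbit i) = card (suborbit ((i + c) mod t))"
    using assms t_pos by (simp add: card_suborbit)
qed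

lemma card_line_inter_suborbit:
  assumes "i < t" "j < t"
  shows "card (line i \<inter> suborbit j) = card (l0 \<inter> suborbit ((j + t - i) mod t))"
proof -
  define e where "e = (j + t - i) mod t"
  have "(e + i) mod t = j"
    using assms by (simp add: e_def mod_add_left_eq)
  then have "suborbit j = (\<sigma> ^^ i) ` suborbit e"
    using image_suborbit t_pos by (simp add: e_def)
  moreover have "line i = (\<sigma> ^^ i) ` l0"
    using line_add[of 0 i] by (simp add: line_def)
  ultimately have "line i \<inter> suborbit j = (\<sigma> ^^ i) ` (l0 \<inter> suborbit e)"
    using inj_on_image_Int[OF inj_on_sigma_funpow line_subset[OF l0_in] suborbit_subset] by simp
  moreover have "inj_on (\<sigma> ^^ i) (l0 \<inter> suborbit e)"
    using suborbit_subset by (intro inj_on_subset[OF inj_on_sigma_funpow]) auto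
  ultimately show ?thesis
    by (simp add: card_image e_def)
qed

lemma block_incidence_matrix:
  "a < d \<Longrightarrow> b < d \<Longrightarrow>
    block d incidence_matrix i j a b = (if point (j + b * t) \<in> line (i + a * t) then 1 else 0)"
  by (simp add: block_def incidence_matrix_def stride_index_block)

lemma weight_block_incidence_matrix:
  assumes "j < t"
  shows "weight d (block d incidence_matrix i j) = card (line i \<inter> suborbit j)"
proof -
  let ?f = "\<lambda>b. point (j + b * t)"
  have inj: "inj_on ?f {..<d}" and img: "?f ` {..<d} = suborbit j"
    using bij_betw_suborbit[OF assms] by (simp_all add: bij_betw_def)
  have "{b. b < d \<and> block d incidence_matrix i j 0 b = 1} = {b \<in> {..<d}. ?f b \<in> line i}"
    using d_pos by (auto simp: block_incidence_matrix split: if_split_asm)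
  then have "weight d (block d incidence_matrix i j) = card {b \<in> {..<d}. ?f b \<in> line i}"
    by (simp add: weight_def)
  also have "\<dots> = card (?f ` {b \<in> {..<d}. ?f b \<in> line i})"
    by (intro card_image[symmetric] inj_on_subset[OF inj]) auto
  also have "?f ` {b \<in> {..<d}. ?f b \<in> line i} = line i \<inter> ?f ` {..<d}"
    by auto
  also have "\<dots> = line i \<inter> suborbit j"
    by (simp only: img)
  finally show ?thesis .
qed

lemma circulant_block_incidence_matrix: "circulant d (block d incidence_matrix i j)"
proof -
  have "incidence_matrix = (\<lambda>r c. (\<lambda>a b. if point a \<in> line b then 1 else 0) (stride_index d t c) (stride_index d t r))"
    by (simp add: fun_eq_iff incidence_matrix_def)
  moreover have "point (a + t * d) = point a" for a
    by (metis v_eq mod_add_self2 point_mod)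
  ultimately show ?thesis
    by (simp only:) (rule circulant_block_stride; simp add: incident_add_iff)
qed

lemma binary_incidence_matrix: "binary_mat m n incidence_matrix"
  by (simp add: binary_mat_def incidence_matrix_def)

lemma no_2x2_ones_incidence_matrix: "no_2x2_ones v v incidence_matrix"
  unfolding no_2x2_ones_def
proof clarify
  fix r1 r2 c1 c2
  assume "r1 < v" "r2 < v" "c1 < v" "c2 < v" "r1 \<noteq> r2" "c1 \<noteq> c2"
    and ones: "incidence_matrix r1 c1 = 1" "incidence_matrix r1 c2 = 1"
      "incidence_matrix r2 c1 = 1" "incidence_matrix r2 c2 = 1"
  then have "stride_index d t c1 \<noteq> stride_index d t c2" "stride_index d t r1 \<noteq> stride_index d t r2"
    and "stride_index d t c1 < v" "stride_index d t c2 < v"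
    and "stride_index d t r1 < v" "stride_index d t r2 < v"
    using inj_on_stride_index[of d t] v_eq by (auto simp: stride_index_less dest: inj_onD)
  moreover have "point (stride_index d t c) \<in> line (stride_index d t r)" if "incidence_matrix r c = 1" for r c
    using that by (simp add: incidence_matrix_def split: if_splits)
  ultimately show False
    using ones no_two_lines_share_two_points by metis
qed

end

theorem corollary1:
  fixes P :: "'a set" and L :: "'a set set" and v k d t :: nat and \<sigma> :: "'a \<Rightarrow> 'a"
    and P0 :: 'a and l0 :: "'a set"
    and Pt :: "nat \<Rightarrow> 'a" and lt :: "nat \<Rightarrow> 'a set" and Orb :: "nat \<Rightarrow> 'a set"
    and w :: "nat \<Rightarrow> nat" and V :: "nat \<Rightarrow> nat \<Rightarrow> nat"
  assumes cyc: "cyclic_sym_config P L v k \<sigma>"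
    and P0: "P0 \<in> P" and l0: "l0 \<in> L"
    and d: "d > 0" "d dvd v"
    and t_def: "t = v div d"
    and Pt_def: "\<And>u. Pt u = (\<sigma> ^^ u) P0"
    and lt_def: "\<And>u. lt u = ((image \<sigma>) ^^ u) l0"
    and Orb_def: "\<And>i. Orb i = {Pt u | u. u < v \<and> u mod t = i}"
    and w_def: "\<And>u. w u = card (l0 \<inter> Orb u)"
    and V_def: "\<And>r c. V r c = (if Pt (c div d + (c mod d) * t) \<in> lt (r div d + (r mod d) * t)
                                 then 1 else 0)"
  shows "binary_mat v v V \<and> no_2x2_ones v v V \<and> block_circulant d v v V \<and>
         (\<forall>i<t. \<forall>j<t. binary_mat d d (block d V i j) \<and> circulant d (block d V i j) \<and>
             no_2x2_ones d d (block d V i j) \<and>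
             weight d (block d V i j) = w ((j + t - i) mod t)) \<and>
         (\<forall>i<t. \<forall>j<t. weight_matrix d V i j = w ((j + t - i) mod t)) \<and>
         circulant t (weight_matrix d V)"
proof -
  interpret cyclic_configuration_blocks P L v k \<sigma> P0 l0 d t
    using cyc P0 l0 d t_def by unfold_locales simp_all
  have Pt: "Pt = point" and lt: "lt = line"
    by (simp_all add: fun_eq_iff Pt_def lt_def point_def line_def)
  have V: "V = incidence_matrix"
    by (simp add: fun_eq_iff V_def incidence_matrix_def stride_index_def Pt lt)
  have w: "w = (\<lambda>e. card (l0 \<inter> suborbit e))"
    by (simp add: fun_eq_iff w_def Orb_def suborbit_def Pt)
  have weights: "weight d (block d V i j) = w ((j + t - i) mod t)" if "i < t" "j < t" for i j
    using that by (simp add: V w weight_block_incidence_matrix card_line_inter_suborbit)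
  show ?thesis
    unfolding block_circulant_def weight_matrix_def
    using weights d binary_incidence_matrix no_2x2_ones_incidence_matrix
      circulant_block_incidence_matrix binary_mat_block no_2x2_ones_block
    by (simp add: V circulant_if_mod_diff[where w = w] v_eq)
qed

end
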